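(* Consider the oLBFGS iteration described in the context and let $\hat B_t$ denote its Hessian approximation. Define $c:=\frac{\tilde m^{\,n+\tau}}{[(n+\tau)\tilde M]^{\,n+\tau-1}}>0$ and $C:=(n+\tau)\tilde M<\infty$. If Assumption A holds, then for all time steps $t\ge1$, $cI\preceq\hat B_t\preceq CI$.
   Context: Let $\theta$ be a random variable with values in a set $\Theta$, $f:\mathbb{R}^n\times\Theta\to\mathbb{R}$, and $F(w)=\mathbb{E}_\theta[f(w,\theta)]$. Fix a sample size $L\ge1$ and memory $\tau\ge1$. For $\tilde\theta=(\theta_1,\dots,\theta_L)\in\Theta^L$ put $\hat f(w,\tilde\theta)=\frac1L\sum_{l=1}^L f(w,\theta_l)$ and $\hat s(w,\tilde\theta)=\frac1L\sum_{l=1}^L\nabla_w f(w,\theta_l)$. oLBFGS: starting from $w_0\in\mathbb{R}^n$, at each $t\ge0$ draw $\tilde\theta_t$ consisting of $L$ independent samples of $\theta$, set $w_{t+1}=w_t-\epsilon_t\hat B_t^{-1}\hat s(w_t,\tilde\theta_t)$ with step sizes $\epsilon_t>0$, and set $v_t=w_{t+1}-w_t$, $\hat r_t=\hat s(w_{t+1},\tilde\theta_t)-\hat s(w_t,\tilde\theta_t)$. The Hessian approximation $\hat B_t$ is built as follows: let $\tau_t=\min(\tau,t)$; set $\hat B_{t,0}=\hat\gamma_t^{-1}I$ with $\hat\gamma_0=1$ and $\hat\gamma_t=v_{t-1}^T\hat r_{t-1}/\|\hat r_{t-1}\|^2$ for $t\ge1$; for $u=0,\dots,\tau_t-1$, with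 $s=t-\tau_t+u$, set $\hat B_{t,u+1}=\hat B_{t,u}-\frac{\hat B_{t,u}v_sv_s^T\hat B_{t,u}}{v_s^T\hat B_{t,u}v_s}+\frac{\hat r_s\hat r_s^T}{v_s^T\hat r_s}$; finally $\hat B_t=\hat B_{t,\tau_t}$, and $\hat B_t^{-1}$ is its inverse. Assumption A: for every $\tilde\theta\in\Theta^L$ the function $w\mapsto\hat f(w,\tilde\theta)$ is twice differentiable and there are constants $0<\tilde m\le\tilde M<\infty$ with $\tilde mI\preceq\nabla_w^2\hat f(w,\tilde\theta)\preceq\tilde MI$ for all $w$ and all $\tilde\theta$. *)

theory Defs
  imports "HOL-Analysis.Analysis"
begin

definition grad :: "(real^'n \<Rightarrow> real) \<Rightarrow> real^'n \<Rightarrow> real^'n" where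
  "grad F w = (SOME g. (F has_derivative (\<lambda>h. g \<bullet> h)) (at w))"

definition hess :: "(real^'n \<Rightarrow> real) \<Rightarrow> real^'n \<Rightarrow> real^'n^'n" where
  "hess F w = (SOME H. (grad F has_derivative (\<lambda>h. H *v h)) (at w))"

definition twice_differentiable :: "(real^'n \<Rightarrow> real) \<Rightarrow> bool" where
  "twice_differentiable F \<longleftrightarrow> (\<forall>w. F differentiable (at w)) \<and> (\<forall>w. grad F differentiable (at w))"

definition loewner_le :: "real^'n^'n \<Rightarrow> real^'n^'n \<Rightarrow> bool" where
  "loewner_le A B \<longleftrightarrow> (\<forall>x. 0 \<le> x \<bullet> ((B - A) *v x))"

(* a sample tuple theta~ in Theta^L is represented as a function nat => 'a, using indices 0..L-1 *)
definition fhat :: "nat \<Rightarrow> (real^'n \<Rightarrow> 'a \<Rightarrow> real) \<Rightarrow> (nat \<Rightarrow> 'a) \<Rightarrow> real^'n \<Rightarrow> real" where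
  "fhat L f ths w = (1 / real L) * (\<Sum>l<L. f w (ths l))"

definition shat :: "nat \<Rightarrow> (real^'n \<Rightarrow> 'a \<Rightarrow> real) \<Rightarrow> (nat \<Rightarrow> 'a) \<Rightarrow> real^'n \<Rightarrow> real^'n" where
  "shat L f ths w = (1 / real L) *\<^sub>R (\<Sum>l<L. grad (\<lambda>x. f x (ths l)) w)"

definition outer :: "real^'n \<Rightarrow> real^'n \<Rightarrow> real^'n^'n" where
  "outer a b = (\<chi> i j. a $ i * b $ j)"

definition bfgs_upd :: "real^'n^'n \<Rightarrow> real^'n \<Rightarrow> real^'n \<Rightarrow> real^'n^'n" where
  "bfgs_upd B v r = B - (1 / (v \<bullet> (B *v v))) *\<^sub>R outer (B *v v) (v v* B)
                      + (1 / (v \<bullet> r)) *\<^sub>R outer r r"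

definition vseq :: "(nat \<Rightarrow> real^'n) \<Rightarrow> nat \<Rightarrow> real^'n" where
  "vseq w t = w (Suc t) - w t"

definition rseq :: "nat \<Rightarrow> (real^'n \<Rightarrow> 'a \<Rightarrow> real) \<Rightarrow> (nat \<Rightarrow> nat \<Rightarrow> 'a) \<Rightarrow> (nat \<Rightarrow> real^'n) \<Rightarrow> nat \<Rightarrow> real^'n" where
  "rseq L f th w t = shat L f (th t) (w (Suc t)) - shat L f (th t) (w t)"

definition gam :: "(nat \<Rightarrow> real^'n) \<Rightarrow> (nat \<Rightarrow> real^'n) \<Rightarrow> nat \<Rightarrow> real" where
  "gam v r t = (if t = 0 then 1 else (v (t - 1) \<bullet> r (t - 1)) / (norm (r (t - 1)))\<^sup>2)"

fun Bu :: "nat \<Rightarrow> (nat \<Rightarrow> real^'n) \<Rightarrow> (nat \<Rightarrow> real^'n) \<Rightarrow> nat \<Rightarrow> nat \<Rightarrow> real^'n^'n" where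
  "Bu tau v r t 0 = inverse (gam v r t) *\<^sub>R mat 1"
| "Bu tau v r t (Suc u) =
     bfgs_upd (Bu tau v r t u) (v (t - min tau t + u)) (r (t - min tau t + u))"

definition Bhat :: "nat \<Rightarrow> (nat \<Rightarrow> real^'n) \<Rightarrow> (nat \<Rightarrow> real^'n) \<Rightarrow> nat \<Rightarrow> real^'n^'n" where
  "Bhat tau v r t = Bu tau v r t (min tau t)"

end

theory Submission
  imports Defs
begin

text \<open>
  Under Assumption A the sample function is \<open>m\<close>-strongly convex with \<open>M\<close>-Lipschitz gradient,
  so every step \<open>v \<noteq> 0\<close> and gradient variation \<open>r\<close> satisfy
  \<open>m |v|\<^sup>2 \<le> v \<bullet> r\<close> and \<open>|r|\<^sup>2 \<le> M (v \<bullet> r)\<close> (the latter is co-coercivity).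
  For such a pair one BFGS update raises an upper bound \<open>C\<close> of the quadratic form to \<open>C + M\<close>
  and turns a lower bound \<open>\<beta>\<close> into \<open>m \<beta> / (M + \<beta>)\<close>.  Starting from
  \<open>\<gamma>\<^sup>-\<^sup>1 \<in> [m, M]\<close>, after \<open>k = min \<tau> t\<close> updates the quadratic form of \<open>B\<^sub>t\<close> lies between
  \<open>m\<^bsup>k+1\<^esup> / ((k+1) M\<^bsup>k\<^esup>)\<close> and \<open>(k+1) M\<close>, which is sharper than the claimed \<open>c\<close> and \<open>C\<close>.
  The steps \<open>v\<^sub>s\<close> are nonzero by induction on \<open>s\<close>: \<open>B\<^sub>s\<close> is then positive definite, hence
  invertible, and the stochastic gradient is nonzero.
\<close>

section \<open>Loewner order and inverse matrices\<close>

lemma mat_scaled_mult_vector: "(c *\<^sub>R mat 1) *v x = c *\<^sub>R (x :: real^'n)"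
  by (simp add: scaleR_matrix_vector_assoc[symmetric])

lemma loewner_le_iff: "loewner_le A B \<longleftrightarrow> (\<forall>x. x \<bullet> (A *v x) \<le> x \<bullet> (B *v x))"
  by (simp add: loewner_le_def matrix_vector_mult_diff_rdistrib inner_diff_right)

lemma loewner_le_trans: "loewner_le A B \<Longrightarrow> loewner_le B C \<Longrightarrow> loewner_le A C"
  unfolding loewner_le_iff by (meson order_trans)

lemma scaled_id_loewner_le_iff:
  "loewner_le (c *\<^sub>R mat 1) B \<longleftrightarrow> (\<forall>x. c * (x \<bullet> x) \<le> x \<bullet> (B *v x))"
  by (simp add: loewner_le_iff mat_scaled_mult_vector)

lemma loewner_le_scaled_id_iff:
  "loewner_le B (c *\<^sub>R mat 1) \<longleftrightarrow> (\<forall>x. x \<bullet> (B *v x) \<le> c * (x \<bullet> x))"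
  by (simp add: loewner_le_iff mat_scaled_mult_vector)

lemma loewner_le_scaled_id_mono:
  "a \<le> b \<Longrightarrow> loewner_le (a *\<^sub>R mat 1) (b *\<^sub>R mat 1 :: real^'n^'n)"
  by (simp add: scaled_id_loewner_le_iff mat_scaled_mult_vector mult_right_mono)

lemma invertible_if_loewner_positive:
  fixes B :: "real^'n^'n"
  assumes "0 < \<beta>" and "loewner_le (\<beta> *\<^sub>R mat 1) B"
  shows "invertible B"
proof -
  have "x = 0" if "B *v x = 0" for x
    using assms that unfolding scaled_id_loewner_le_iff
    by (metis inner_zero_right inner_gt_zero_iff mult_pos_pos not_le)
  then show ?thesis using matrix_left_invertible_ker invertible_left_inverse by blast
qed

lemma matrix_inv_right:
  fixes A :: "'a::field^'n^'n"
  assumes "invertible A"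
  shows "A ** matrix_inv A = mat 1"
  using assms unfolding invertible_def matrix_inv_def by (rule someI_ex[THEN conjunct1])

lemma matrix_inv_mult_vector_nonzero:
  fixes A :: "real^'n^'n"
  assumes "invertible A" and "y \<noteq> 0"
  shows "matrix_inv A *v y \<noteq> 0"
  using assms by (metis matrix_inv_right matrix_vector_mul_assoc matrix_vector_mul_lid matrix_vector_mult_0_right)

section \<open>The BFGS update\<close>

lemma outer_mult_vector: "outer a b *v x = (b \<bullet> x) *\<^sub>R (a :: real^'n)"
  by (simp add: outer_def matrix_vector_mult_def inner_vec_def vec_eq_iff
      sum_distrib_left mult_ac)

lemma symmetric_vector_mult: "transpose B = B \<Longrightarrow> v v* B = B *v (v :: real^'n)"
  by (metis transpose_matrix_vector)

lemma symmetric_inner_mult_vector: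
  "transpose B = B \<Longrightarrow> x \<bullet> (B *v y) = y \<bullet> (B *v (x :: real^'n))"
  by (metis dot_lmul_matrix inner_commute symmetric_vector_mult)

lemma transpose_bfgs_upd:
  "transpose B = B \<Longrightarrow> transpose (bfgs_upd B v r) = bfgs_upd B v (r :: real^'n)"
  by (simp add: bfgs_upd_def symmetric_vector_mult outer_def transpose_def vec_eq_iff mult.commute)

lemma bfgs_upd_quadratic_form:
  assumes "transpose B = B"
  shows "x \<bullet> (bfgs_upd B v r *v x) =
    x \<bullet> (B *v x) - (x \<bullet> (B *v v))\<^sup>2 / (v \<bullet> (B *v v)) + (r \<bullet> x)\<^sup>2 / (v \<bullet> (r :: real^'n))"
  using assms
  by (simp add: bfgs_upd_def symmetric_vector_mult algebra_simps outer_mult_vector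
      scaleR_matrix_vector_assoc[symmetric] symmetric_inner_mult_vector[of B x v]
      power2_eq_square inner_commute)

lemma bfgs_upd_quadratic_form_decomposition:
  fixes B :: "real^'n^'n"
  assumes sym: "transpose B = B" and pos: "0 < v \<bullet> (B *v v)"
  obtains u t where "x = u + t *\<^sub>R v"
    "x \<bullet> (bfgs_upd B v r *v x) = u \<bullet> (B *v u) + (r \<bullet> x)\<^sup>2 / (v \<bullet> r)"
proof
  define t where "t = (x \<bullet> (B *v v)) / (v \<bullet> (B *v v))"
  show "x = (x - t *\<^sub>R v) + t *\<^sub>R v" by simp
  have "(x - t *\<^sub>R v) \<bullet> (B *v (x - t *\<^sub>R v))
      = x \<bullet> (B *v x) - 2 * t * (x \<bullet> (B *v v)) + t\<^sup>2 * (v \<bullet> (B *v v))"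
    using symmetric_inner_mult_vector[OF sym, of v x]
    by (simp add: matrix_vector_mult_diff_distrib matrix_vector_mult_scaleR
        inner_diff_left inner_diff_right algebra_simps power2_eq_square)
  also have "\<dots> = x \<bullet> (B *v x) - (x \<bullet> (B *v v))\<^sup>2 / (v \<bullet> (B *v v))"
    unfolding t_def using pos by (simp add: power2_eq_square field_simps)
  finally show "x \<bullet> (bfgs_upd B v r *v x)
      = (x - t *\<^sub>R v) \<bullet> (B *v (x - t *\<^sub>R v)) + (r \<bullet> x)\<^sup>2 / (v \<bullet> r)"
    by (simp add: bfgs_upd_quadratic_form[OF sym])
qed

lemma weighted_Cauchy_Schwarz_2:
  fixes a b p q \<alpha> \<gamma> :: real
  assumes "0 < \<alpha>" "0 < \<gamma>"
  shows "(a * p + b * q)\<^sup>2 \<le> (a\<^sup>2 / \<alpha> + b\<^sup>2 / \<gamma>) * (\<alpha> * p\<^sup>2 + \<gamma> * q\<^sup>2)"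
proof -
  have "\<alpha> * \<gamma> * (a * p + b * q)\<^sup>2 \<le> \<alpha> * \<gamma> * ((a\<^sup>2 / \<alpha> + b\<^sup>2 / \<gamma>) * (\<alpha> * p\<^sup>2 + \<gamma> * q\<^sup>2))"
  proof -
    have "\<alpha> * \<gamma> * ((a\<^sup>2 / \<alpha> + b\<^sup>2 / \<gamma>) * (\<alpha> * p\<^sup>2 + \<gamma> * q\<^sup>2)) - \<alpha> * \<gamma> * (a * p + b * q)\<^sup>2
        = (a * \<gamma> * q - b * \<alpha> * p)\<^sup>2"
      using assms by (simp add: field_simps power2_eq_square)
    then show ?thesis by (smt (verit) zero_le_power2)
  qed
  then show ?thesis using assms by simp
qed

text \<open>The Gram determinant of \<open>u, v, r\<close> is nonnegative.\<close>
lemma norm_inner_scaled_diff_le: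
  fixes u v r :: "real^'n"
  shows "norm ((v \<bullet> r) *\<^sub>R u - (r \<bullet> u) *\<^sub>R v) \<le> norm r * norm v * norm u"
proof (cases "v = 0")
  case False
  define a b c d e g where defs: "a = u \<bullet> u" "b = u \<bullet> v" "c = v \<bullet> v" "d = u \<bullet> r" "e = r \<bullet> r" "g = v \<bullet> r"
  have c0: "0 < c" using False unfolding defs by simp
  have "((c *\<^sub>R u - b *\<^sub>R v) \<bullet> (c *\<^sub>R r - g *\<^sub>R v))\<^sup>2
      \<le> ((c *\<^sub>R u - b *\<^sub>R v) \<bullet> (c *\<^sub>R u - b *\<^sub>R v)) * ((c *\<^sub>R r - g *\<^sub>R v) \<bullet> (c *\<^sub>R r - g *\<^sub>R v))"
    by (rule Cauchy_Schwarz_ineq)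
  then have "(c * (c * d - b * g))\<^sup>2 \<le> (c * (a * c - b * b)) * (c * (c * e - g * g))"
    unfolding defs
    by (simp add: inner_simps inner_commute algebra_simps power2_eq_square)
  then have "c * (c * (c * (c * d * d - 2 * b * d * g + a * g * g))) \<le> c * (c * (c * (a * c * e - b * b * e)))"
    by (simp add: power2_eq_square algebra_simps)
  then have "c * d * d - 2 * b * d * g + a * g * g \<le> a * c * e - b * b * e"
    using c0 by simp
  moreover have "0 \<le> b * b * e" unfolding defs by simp
  ultimately have gram: "a * g * g - 2 * b * d * g + c * d * d \<le> a * c * e" by linarith
  have "(norm ((v \<bullet> r) *\<^sub>R u - (r \<bullet> u) *\<^sub>R v))\<^sup>2 = a * g * g - 2 * b * d * g + c * d * d"
    unfolding defs power2_norm_eq_inner by (simp add: inner_simps inner_commute algebra_simps)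
  also have "\<dots> \<le> (norm r * norm v * norm u)\<^sup>2"
    using gram unfolding defs by (simp add: power2_norm_eq_inner power_mult_distrib mult_ac)
  finally show ?thesis by (rule power2_le_imp_le) simp
qed simp

lemma bfgs_upd_upper:
  fixes B :: "real^'n^'n"
  assumes sym: "transpose B = B" and "0 \<le> v \<bullet> (B *v v)" and "0 < v \<bullet> r"
    and "r \<bullet> r \<le> M * (v \<bullet> r)" and "loewner_le B (C *\<^sub>R mat 1)"
  shows "loewner_le (bfgs_upd B v r) ((C + M) *\<^sub>R mat 1)"
  unfolding loewner_le_scaled_id_iff
proof
  fix x :: "real^'n"
  have "(r \<bullet> x)\<^sup>2 / (v \<bullet> r) \<le> (r \<bullet> r) * (x \<bullet> x) / (v \<bullet> r)"
    using Cauchy_Schwarz_ineq[of r x] assms(3) by (simp add: divide_right_mono)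
  also have "\<dots> \<le> M * (x \<bullet> x)"
    using mult_right_mono[OF assms(4), of "x \<bullet> x"] assms(3) by (simp add: divide_le_eq mult_ac)
  finally have "(r \<bullet> x)\<^sup>2 / (v \<bullet> r) \<le> M * (x \<bullet> x)" .
  moreover have "0 \<le> (x \<bullet> (B *v v))\<^sup>2 / (v \<bullet> (B *v v))" using assms(2) by simp
  moreover have "x \<bullet> (B *v x) \<le> C * (x \<bullet> x)"
    using assms(5) unfolding loewner_le_scaled_id_iff by blast
  ultimately show "x \<bullet> (bfgs_upd B v r *v x) \<le> (C + M) * (x \<bullet> x)"
    unfolding bfgs_upd_quadratic_form[OF sym] by (simp add: algebra_simps)
qed

lemma bfgs_upd_lower:
  fixes B :: "real^'n^'n"
  assumes sym: "transpose B = B" and \<beta>: "0 < \<beta>" and lower: "loewner_le (\<beta> *\<^sub>R mat 1) B"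
    and "0 < v \<bullet> r"
  shows "x \<bullet> x \<le> ((norm r * norm v / (v \<bullet> r))\<^sup>2 / \<beta> + (v \<bullet> v) / (v \<bullet> r))
                  * (x \<bullet> (bfgs_upd B v r *v x))"
proof -
  define g s where "g = v \<bullet> r" and "s = r \<bullet> x"
  have g: "0 < g" using assms(4) unfolding g_def .
  have lower': "\<beta> * (y \<bullet> y) \<le> y \<bullet> (B *v y)" for y
    using lower unfolding scaled_id_loewner_le_iff by blast
  have "v \<noteq> 0" using g unfolding g_def by auto
  then have "0 < v \<bullet> (B *v v)" using lower'[of v] \<beta> by (smt (verit) inner_gt_zero_iff mult_pos_pos)
  then obtain u t where x: "x = u + t *\<^sub>R v"
    and Q: "x \<bullet> (bfgs_upd B v r *v x) = u \<bullet> (B *v u) + s\<^sup>2 / g"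
    using bfgs_upd_quadratic_form_decomposition[OF sym] unfolding g_def s_def by blast
  \<comment> \<open>\<open>x - (s/g) v\<close> is orthogonal to \<open>r\<close>, so its norm is controlled by \<open>|u|\<close> alone\<close>
  have "s = r \<bullet> u + t * g"
    unfolding s_def g_def x by (simp add: inner_add_right inner_commute)
  moreover have "g *\<^sub>R (x - (s / g) *\<^sub>R v) = g *\<^sub>R x - s *\<^sub>R v"
    using g by (simp add: scaleR_diff_right)
  ultimately have "g *\<^sub>R (x - (s / g) *\<^sub>R v) = g *\<^sub>R u - (r \<bullet> u) *\<^sub>R v"
    unfolding x by (simp add: algebra_simps)
  then have "g * norm (x - (s / g) *\<^sub>R v) \<le> norm r * norm v * norm u"
    using norm_inner_scaled_diff_le[of v r u, folded g_def] g by (metis abs_of_pos norm_scaleR)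
  then have "norm (x - (s / g) *\<^sub>R v) \<le> (norm r * norm v / g) * norm u"
    using g by (simp add: field_simps)
  moreover have "norm x \<le> norm (x - (s / g) *\<^sub>R v) + (norm v / g) * \<bar>s\<bar>"
    using norm_triangle_ineq[of "x - (s / g) *\<^sub>R v" "(s / g) *\<^sub>R v"] g by (simp add: abs_div mult.commute)
  ultimately have "norm x \<le> (norm r * norm v / g) * norm u + (norm v / g) * \<bar>s\<bar>" by linarith
  then have "x \<bullet> x \<le> ((norm r * norm v / g) * norm u + (norm v / g) * \<bar>s\<bar>)\<^sup>2"
    by (simp add: power2_norm_eq_inner[symmetric] power_mono)
  also have "\<dots> \<le> ((norm r * norm v / g)\<^sup>2 / \<beta> + (norm v / g)\<^sup>2 / (1 / g))
                   * (\<beta> * (norm u)\<^sup>2 + (1 / g) * \<bar>s\<bar>\<^sup>2)"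
    using \<beta> g by (intro weighted_Cauchy_Schwarz_2) simp_all
  also have "\<dots> = ((norm r * norm v / g)\<^sup>2 / \<beta> + (v \<bullet> v) / g) * (\<beta> * (u \<bullet> u) + s\<^sup>2 / g)"
    using g by (simp add: dot_square_norm power_divide power2_eq_square)
  also have "\<dots> \<le> ((norm r * norm v / g)\<^sup>2 / \<beta> + (v \<bullet> v) / g) * (x \<bullet> (bfgs_upd B v r *v x))"
    unfolding Q using lower'[of u] \<beta> g by (intro mult_left_mono) simp_all
  finally show ?thesis unfolding g_def .
qed

section \<open>Curvature pairs and the bounds on the Hessian approximation\<close>

definition curvature_pair :: "real \<Rightarrow> real \<Rightarrow> real^'n \<Rightarrow> real^'n \<Rightarrow> bool" where
  "curvature_pair m M v r \<longleftrightarrow> v \<noteq> 0 \<and> m * (v \<bullet> v) \<le> v \<bullet> r \<and> r \<bullet> r \<le> M * (v \<bullet> r)"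

lemma curvature_pair_inner_pos:
  assumes "0 < m" "curvature_pair m M v r"
  shows "0 < v \<bullet> r"
  using assms unfolding curvature_pair_def
  by (smt (verit) inner_gt_zero_iff mult_pos_pos)

lemma curvature_pair_ratio_bounds:
  assumes "0 < m" "curvature_pair m M v r"
  shows "m \<le> (r \<bullet> r) / (v \<bullet> r)" "(r \<bullet> r) / (v \<bullet> r) \<le> M"
proof -
  have g: "0 < v \<bullet> r" using curvature_pair_inner_pos[OF assms] .
  have vr: "m * (v \<bullet> v) \<le> v \<bullet> r" "r \<bullet> r \<le> M * (v \<bullet> r)"
    using assms(2) unfolding curvature_pair_def by auto
  have "m * (v \<bullet> r) * (v \<bullet> v) \<le> (v \<bullet> r)\<^sup>2"
    using vr(1) g by (simp add: power2_eq_square mult_left_mono mult_ac)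
  also have "\<dots> \<le> (r \<bullet> r) * (v \<bullet> v)"
    using Cauchy_Schwarz_ineq[of v r] by (simp add: mult.commute)
  finally have "m * (v \<bullet> r) \<le> r \<bullet> r"
    using assms(2) unfolding curvature_pair_def by simp
  then show "m \<le> (r \<bullet> r) / (v \<bullet> r)" using g by (simp add: le_divide_eq)
  show "(r \<bullet> r) / (v \<bullet> r) \<le> M" using vr(2) g by (simp add: divide_le_eq)
qed

lemma bfgs_upd_lower_curvature:
  fixes B :: "real^'n^'n"
  assumes sym: "transpose B = B" and m: "0 < m" and \<beta>: "0 < \<beta>"
    and lower: "loewner_le (\<beta> *\<^sub>R mat 1) B" and pair: "curvature_pair m M v r"
  shows "loewner_le ((m * \<beta> / (M + \<beta>)) *\<^sub>R mat 1) (bfgs_upd B v r)"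
  unfolding scaled_id_loewner_le_iff
proof
  fix x :: "real^'n"
  define g where "g = v \<bullet> r"
  define k where "k = (norm r * norm v / g)\<^sup>2 / \<beta> + (v \<bullet> v) / g"
  define Q where "Q = x \<bullet> (bfgs_upd B v r *v x)"
  have g: "0 < g" unfolding g_def using curvature_pair_inner_pos[OF m pair] .
  have vr: "v \<noteq> 0" "m * (v \<bullet> v) \<le> g" "r \<bullet> r \<le> M * g"
    using pair unfolding curvature_pair_def g_def by auto
  have M: "m \<le> M" using curvature_pair_ratio_bounds[OF m pair] by linarith
  have "(norm r * norm v)\<^sup>2 = (r \<bullet> r) * (v \<bullet> v)"
    by (simp add: power_mult_distrib dot_square_norm)
  also have "\<dots> \<le> (M * g) * (g / m)"
    using vr m g M by (intro mult_mono) (simp_all add: le_divide_eq mult.commute)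
  finally have "(norm r * norm v / g)\<^sup>2 \<le> M / m"
    using m g by (simp add: power_divide divide_le_eq power2_eq_square)
  moreover have "(v \<bullet> v) / g \<le> 1 / m" using vr(2) m g by (simp add: field_simps)
  ultimately have "k \<le> (M / m) / \<beta> + 1 / m"
    unfolding k_def using \<beta> by (smt (verit) divide_right_mono)
  also have "\<dots> = (M + \<beta>) / (m * \<beta>)" using m \<beta> by (simp add: field_simps)
  finally have k: "k \<le> (M + \<beta>) / (m * \<beta>)" .
  have "x \<bullet> x \<le> k * Q"
    unfolding k_def Q_def g_def by (rule bfgs_upd_lower[OF sym \<beta> lower]) (use g g_def in simp)
  moreover have "0 < k" unfolding k_def using vr(1) g \<beta> by (simp add: add_nonneg_pos)
  ultimately have "0 \<le> Q" by (smt (verit) inner_ge_zero zero_le_mult_iff)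
  have c: "0 < m * \<beta> / (M + \<beta>)" using m M \<beta> by simp
  have "m * \<beta> / (M + \<beta>) * (x \<bullet> x) \<le> m * \<beta> / (M + \<beta>) * (k * Q)"
    by (rule mult_left_mono[OF \<open>x \<bullet> x \<le> k * Q\<close>]) (use c in simp)
  also have "\<dots> \<le> m * \<beta> / (M + \<beta>) * ((M + \<beta>) / (m * \<beta>) * Q)"
    using k \<open>0 \<le> Q\<close> c by (intro mult_left_mono mult_right_mono) simp_all
  also have "\<dots> = Q" using m M \<beta> by simp
  finally show "m * \<beta> / (M + \<beta>) * (x \<bullet> x) \<le> Q" .
qed

lemma bfgs_lower_bound_recurrence:
  fixes m M \<beta> :: real
  assumes m: "0 < m" and M: "m \<le> M" and \<beta>: "m ^ (u + 1) / (real (u + 1) * M ^ u) \<le> \<beta>"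
  shows "m ^ (u + 2) / (real (u + 2) * M ^ (u + 1)) \<le> m * \<beta> / (M + \<beta>)"
proof -
  define p D where "p = m ^ (u + 1)" and "D = real (u + 1) * M ^ u"
  define b where "b = p / D"
  have M0: "0 < M" using m M by linarith
  have p: "0 < p" and D: "0 < D" unfolding p_def D_def using m M0 by simp_all
  have b: "0 < b" and b\<beta>: "b \<le> \<beta>" using \<beta> p D unfolding b_def p_def D_def by simp_all
  have "p \<le> M ^ (u + 1)" unfolding p_def by (rule power_mono[OF M]) (use m in simp)
  then have "M * D + p \<le> real (u + 2) * M ^ (u + 1)"
    unfolding D_def by (simp add: algebra_simps)
  then have "m * p / (real (u + 2) * M ^ (u + 1)) \<le> m * p / (M * D + p)"
    by (rule divide_left_mono) (use m M0 p D in \<open>simp_all add: add_pos_pos\<close>)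
  then have "m ^ (u + 2) / (real (u + 2) * M ^ (u + 1)) \<le> m * p / (M * D + p)"
    unfolding p_def by simp
  also have "\<dots> = m * b / (M + b)"
    unfolding b_def using D by (simp add: field_simps)
  also have "\<dots> \<le> m * \<beta> / (M + \<beta>)"
  proof -
    have "m * b * (M + \<beta>) \<le> m * \<beta> * (M + b)"
      using mult_left_mono[OF b\<beta>, of "m * M"] m M0 by (simp add: algebra_simps)
    moreover have "0 < M + b" "0 < M + \<beta>" using b b\<beta> M0 by linarith+
    ultimately show ?thesis by (simp add: field_simps)
  qed
  finally show ?thesis .
qed

lemma Bu_bounds:
  fixes v r :: "nat \<Rightarrow> real^'n"
  assumes m: "0 < m" and M: "m \<le> M" and t: "1 \<le> t"
    and pairs: "\<forall>s<t. curvature_pair m M (v s) (r s)"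
  shows "u \<le> min \<tau> t \<Longrightarrow> transpose (Bu \<tau> v r t u) = Bu \<tau> v r t u \<and>
    loewner_le ((m ^ (u + 1) / (real (u + 1) * M ^ u)) *\<^sub>R mat 1) (Bu \<tau> v r t u) \<and>
    loewner_le (Bu \<tau> v r t u) ((real (u + 1) * M) *\<^sub>R mat 1)"
proof (induction u)
  case 0
  define s where "s = t - 1"
  have "s < t" using t unfolding s_def by simp
  then have pair: "curvature_pair m M (v s) (r s)" using pairs by blast
  define \<gamma> where "\<gamma> = (r s \<bullet> r s) / (v s \<bullet> r s)"
  have B0: "Bu \<tau> v r t 0 = \<gamma> *\<^sub>R mat 1"
    using t unfolding \<gamma>_def s_def by (simp add: gam_def power2_norm_eq_inner)
  have "m \<le> \<gamma>" "\<gamma> \<le> M"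
    using curvature_pair_ratio_bounds[OF m pair] unfolding \<gamma>_def by simp_all
  then show ?case
    unfolding B0 by (simp add: transpose_scalar loewner_le_scaled_id_mono)
next
  case (Suc u)
  define s where "s = t - min \<tau> t + u"
  define B where "B = Bu \<tau> v r t u"
  define \<beta> where "\<beta> = m ^ (u + 1) / (real (u + 1) * M ^ u)"
  have "s < t" using Suc.prems unfolding s_def by linarith
  then have pair: "curvature_pair m M (v s) (r s)" using pairs by blast
  have step: "Bu \<tau> v r t (Suc u) = bfgs_upd B (v s) (r s)" unfolding B_def s_def by simp
  have sym: "transpose B = B" and lower: "loewner_le (\<beta> *\<^sub>R mat 1) B"
    and upper: "loewner_le B ((real (u + 1) * M) *\<^sub>R mat 1)"
    using Suc unfolding B_def \<beta>_def by auto
  have \<beta>: "0 < \<beta>" unfolding \<beta>_def using m M by simp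
  have "loewner_le ((m ^ (Suc u + 1) / (real (Suc u + 1) * M ^ Suc u)) *\<^sub>R mat 1)
                   ((m * \<beta> / (M + \<beta>)) *\<^sub>R mat 1)"
    using bfgs_lower_bound_recurrence[OF m M, of u \<beta>] unfolding \<beta>_def
    by (simp add: loewner_le_scaled_id_mono)
  moreover have "loewner_le ((m * \<beta> / (M + \<beta>)) *\<^sub>R mat 1) (bfgs_upd B (v s) (r s))"
    by (rule bfgs_upd_lower_curvature[OF sym m \<beta> lower pair])
  moreover have "0 \<le> v s \<bullet> (B *v v s)"
    using lower \<beta> unfolding scaled_id_loewner_le_iff by (smt (verit) inner_ge_zero mult_nonneg_nonneg)
  then have "loewner_le (bfgs_upd B (v s) (r s)) ((real (u + 1) * M + M) *\<^sub>R mat 1)"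
    using pair curvature_pair_inner_pos[OF m pair] upper
    unfolding curvature_pair_def by (intro bfgs_upd_upper[OF sym]) auto
  ultimately show ?case
    unfolding step using transpose_bfgs_upd[OF sym] loewner_le_trans
    by (auto simp: algebra_simps)
qed

lemma olbfgs_lower_constant_le:
  fixes m M :: real
  assumes m: "0 < m" and M: "m \<le> M" and kN: "k + 1 \<le> N"
  shows "m ^ N / (real N * M) ^ (N - 1) \<le> m ^ (k + 1) / (real (k + 1) * M ^ k)"
proof -
  obtain d where N: "N = k + 1 + d" using kN le_Suc_ex by blast
  have M0: "0 < M" using m M by linarith
  have "real (k + 1) \<le> real N ^ (k + d)"
  proof (cases "k + d = 0")
    case False
    then have "real N ^ 1 \<le> real N ^ (k + d)" using N by (intro power_increasing) auto
    then show ?thesis using N by simp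
  qed (use N in simp)
  then have "real (k + 1) * M ^ k * M ^ d \<le> real N ^ (k + d) * M ^ k * M ^ d"
    using M0 by (simp add: mult_right_mono)
  moreover have "m ^ (k + 1) * m ^ d \<le> m ^ (k + 1) * M ^ d"
    using m M by (simp add: mult_left_mono power_mono)
  ultimately have "m ^ (k + 1) * m ^ d / (real N ^ (k + d) * M ^ k * M ^ d)
      \<le> m ^ (k + 1) * M ^ d / (real (k + 1) * M ^ k * M ^ d)"
    using m M0 by (intro frac_le) simp_all
  moreover have "m ^ N / (real N * M) ^ (N - 1) = m ^ (k + 1) * m ^ d / (real N ^ (k + d) * M ^ k * M ^ d)"
    unfolding N by (simp add: power_add power_mult_distrib mult_ac)
  ultimately show ?thesis using M0 by simp
qed

lemma Bhat_bounds:
  fixes v r :: "nat \<Rightarrow> real^'n"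
  assumes m: "0 < m" and M: "m \<le> M" and t: "1 \<le> t"
    and pairs: "\<forall>s<t. curvature_pair m M (v s) (r s)" and N: "min \<tau> t < N"
  shows "loewner_le ((m ^ N / (real N * M) ^ (N - 1)) *\<^sub>R mat 1) (Bhat \<tau> v r t)"
    and "loewner_le (Bhat \<tau> v r t) ((real N * M) *\<^sub>R mat 1)"
proof -
  define k where "k = min \<tau> t"
  have B: "loewner_le ((m ^ (k + 1) / (real (k + 1) * M ^ k)) *\<^sub>R mat 1) (Bhat \<tau> v r t)"
    "loewner_le (Bhat \<tau> v r t) ((real (k + 1) * M) *\<^sub>R mat 1)"
    using Bu_bounds[OF m M t pairs, of k \<tau>] unfolding k_def Bhat_def by auto
  have kN: "k + 1 \<le> N" using N unfolding k_def by simp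
  show "loewner_le ((m ^ N / (real N * M) ^ (N - 1)) *\<^sub>R mat 1) (Bhat \<tau> v r t)"
    by (rule loewner_le_trans[OF loewner_le_scaled_id_mono[OF olbfgs_lower_constant_le[OF m M kN]] B(1)])
  have "real (k + 1) * M \<le> real N * M" using kN m M by (intro mult_right_mono) simp_all
  then show "loewner_le (Bhat \<tau> v r t) ((real N * M) *\<^sub>R mat 1)"
    by (rule loewner_le_trans[OF B(2) loewner_le_scaled_id_mono])
qed

lemma Bhat_positive_definite:
  fixes v r :: "nat \<Rightarrow> real^'n"
  assumes m: "0 < m" and M: "m \<le> M" and pairs: "\<forall>s'<s. curvature_pair m M (v s') (r s')"
  obtains \<beta> where "0 < \<beta>" "loewner_le (\<beta> *\<^sub>R mat 1) (Bhat \<tau> v r s)"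
proof (cases "s = 0")
  case True
  then have "Bhat \<tau> v r s = 1 *\<^sub>R mat 1" by (simp add: Bhat_def gam_def)
  then show ?thesis using that[of 1] loewner_le_scaled_id_mono[of 1 1] by simp
next
  case False
  define N where "N = Suc (min \<tau> s)"
  have "0 < m ^ N / (real N * M) ^ (N - 1)" using m M unfolding N_def by simp
  then show ?thesis
    by (rule that[OF _ Bhat_bounds(1)[OF m M _ pairs]]) (use False N_def in simp_all)
qed

lemma olbfgs_curvature_pairs:
  fixes v r g :: "nat \<Rightarrow> real^'n"
  assumes m: "0 < m" and M: "m \<le> M"
    and pair_if_moving: "\<And>s. v s \<noteq> 0 \<Longrightarrow> curvature_pair m M (v s) (r s)"
    and step: "\<And>s. v s = - (\<epsilon> s *\<^sub>R (matrix_inv (Bhat \<tau> v r s) *v g s))"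
    and step_sizes: "\<And>s. \<epsilon> s \<noteq> 0" and moving: "\<forall>s<t. g s \<noteq> 0"
  shows "\<forall>s<t. curvature_pair m M (v s) (r s)"
proof -
  have "s < t \<longrightarrow> curvature_pair m M (v s) (r s)" for s
  proof (induction s rule: less_induct)
    case (less s)
    show ?case
    proof
      assume s: "s < t"
      have "\<forall>s'<s. curvature_pair m M (v s') (r s')" using less.IH s by simp
      then obtain \<beta> where "0 < \<beta>" "loewner_le (\<beta> *\<^sub>R mat 1) (Bhat \<tau> v r s)"
        by (rule Bhat_positive_definite[OF m M])
      then have "invertible (Bhat \<tau> v r s)" by (rule invertible_if_loewner_positive)
      then have "v s \<noteq> 0"
        using matrix_inv_mult_vector_nonzero moving s step_sizes[of s] step[of s] by auto
      then show "curvature_pair m M (v s) (r s)" by (rule pair_if_moving)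
    qed
  qed
  then show ?thesis by blast
qed

section \<open>Strongly convex functions with Lipschitz gradient\<close>

lemma has_derivative_grad:
  fixes F :: "real^'n \<Rightarrow> real"
  assumes "F differentiable (at w)"
  shows "(F has_derivative (\<lambda>h. grad F w \<bullet> h)) (at w)"
proof -
  obtain D where D: "(F has_derivative D) (at w)" using assms unfolding differentiable_def by blast
  have "D = (\<lambda>h. adjoint D 1 \<bullet> h)"
    using adjoint_works[OF has_derivative_linear[OF D], of _ 1] by (auto simp: inner_commute)
  with D show ?thesis unfolding grad_def by (metis (mono_tags) someI_ex)
qed

lemma grad_eqI:
  fixes F :: "real^'n \<Rightarrow> real"
  assumes "(F has_derivative (\<lambda>h. g \<bullet> h)) (at w)"
  shows "grad F w = g"
proof -
  have "(\<lambda>h. g \<bullet> h) = (\<lambda>h. grad F w \<bullet> h)"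
    using has_derivative_unique[OF assms has_derivative_grad] assms differentiableI by blast
  then have "(g - grad F w) \<bullet> (g - grad F w) = 0" by (metis inner_diff_left right_minus_eq)
  then show ?thesis by simp
qed

lemma has_derivative_hess:
  fixes F :: "real^'n \<Rightarrow> real"
  assumes "grad F differentiable (at w)"
  shows "(grad F has_derivative (\<lambda>h. hess F w *v h)) (at w)"
proof -
  obtain D where D: "(grad F has_derivative D) (at w)" using assms unfolding differentiable_def by blast
  have "D = (\<lambda>h. matrix D *v h)" using matrix_vector_mul(2)[OF has_derivative_linear[OF D]] by simp
  with D show ?thesis unfolding hess_def by (metis (mono_tags) someI_ex)
qed

lemma fhat_const: "1 \<le> L \<Longrightarrow> fhat L f (\<lambda>_. a) = (\<lambda>w. f w a)"
  by (auto simp: fhat_def fun_eq_iff)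

lemma shat_eq_grad_fhat:
  fixes f :: "real^'n \<Rightarrow> 'a \<Rightarrow> real"
  assumes "\<forall>l<L. (\<lambda>x. f x (ths l)) differentiable (at w)"
  shows "shat L f ths w = grad (fhat L f ths) w"
proof (rule grad_eqI[symmetric])
  have "((\<lambda>x. \<Sum>l<L. f x (ths l)) has_derivative (\<lambda>h. \<Sum>l<L. grad (\<lambda>x. f x (ths l)) w \<bullet> h)) (at w)"
    using assms by (intro has_derivative_sum) (simp add: has_derivative_grad)
  then have "((\<lambda>x. (1 / real L) * (\<Sum>l<L. f x (ths l))) has_derivative
      (\<lambda>h. (1 / real L) * (\<Sum>l<L. grad (\<lambda>x. f x (ths l)) w \<bullet> h))) (at w)"
    by (rule has_derivative_mult_right)
  then show "(fhat L f ths has_derivative (\<lambda>h. shat L f ths w \<bullet> h)) (at w)"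
    by (simp add: fhat_def[abs_def] shat_def inner_sum_left[symmetric])
qed

lemma increasing_if_deriv_nonneg:
  fixes \<psi> \<psi>' :: "real \<Rightarrow> real"
  assumes "a \<le> b" and "\<And>s. (\<psi> has_real_derivative \<psi>' s) (at s)"
    and "\<And>s. a < s \<Longrightarrow> s < b \<Longrightarrow> 0 \<le> \<psi>' s"
  shows "\<psi> a \<le> \<psi> b"
proof (rule DERIV_nonneg_imp_increasing_open[OF assms(1)])
  show "\<exists>y. (\<psi> has_real_derivative y) (at s) \<and> 0 \<le> y" if "a < s" "s < b" for s
    using assms(2,3) that by blast
  show "continuous_on {a..b} \<psi>"
    by (rule DERIV_continuous_on[OF has_field_derivative_at_within[OF assms(2)]])
qed

locale strongly_convex_smooth =
  fixes F :: "real^'n \<Rightarrow> real" and m M :: real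
  assumes twice_diff: "twice_differentiable F"
    and hess_bounds: "\<And>x. loewner_le (m *\<^sub>R mat 1) (hess F x) \<and> loewner_le (hess F x) (M *\<^sub>R mat 1)"
    and m_pos: "0 < m" and m_le_M: "m \<le> M"
begin

lemma line_has_derivative: "((\<lambda>s. x + s *\<^sub>R d) has_derivative (\<lambda>h. h *\<^sub>R d)) (at s)"
  by (auto intro!: derivative_eq_intros)

lemma has_real_derivative_along_line:
  "((\<lambda>s. F (x + s *\<^sub>R d)) has_real_derivative (grad F (x + s *\<^sub>R d) \<bullet> d)) (at s)"
proof -
  have "(F has_derivative (\<lambda>h. grad F (x + s *\<^sub>R d) \<bullet> h)) (at (x + s *\<^sub>R d))"
    using twice_diff has_derivative_grad unfolding twice_differentiable_def by blast
  from has_derivative_compose[OF line_has_derivative this] show ?thesis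
    unfolding has_field_derivative_def by (simp add: mult.commute[of _ "grad F (x + s *\<^sub>R d) \<bullet> d"])
qed

lemma grad_has_real_derivative_along_line:
  "((\<lambda>s. d \<bullet> grad F (x + s *\<^sub>R d)) has_real_derivative (d \<bullet> (hess F (x + s *\<^sub>R d) *v d))) (at s)"
proof -
  have "(grad F has_derivative (\<lambda>h. hess F (x + s *\<^sub>R d) *v h)) (at (x + s *\<^sub>R d))"
    using twice_diff has_derivative_hess unfolding twice_differentiable_def by blast
  from has_derivative_compose[OF line_has_derivative this]
  have "((\<lambda>s. d \<bullet> grad F (x + s *\<^sub>R d)) has_derivative (\<lambda>h. d \<bullet> (hess F (x + s *\<^sub>R d) *v (h *\<^sub>R d)))) (at s)"
    by (rule has_derivative_inner_right)
  then show ?thesis unfolding has_field_derivative_def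
    by (simp add: matrix_vector_mult_scaleR mult.commute[of _ "d \<bullet> (hess F (x + s *\<^sub>R d) *v d)"])
qed

lemma inner_grad_diff_bounds:
  "m * (d \<bullet> d) \<le> d \<bullet> (grad F (x + d) - grad F x)"
  "d \<bullet> (grad F (x + d) - grad F x) \<le> M * (d \<bullet> d)"
proof -
  obtain z where "d \<bullet> grad F (x + 1 *\<^sub>R d) - d \<bullet> grad F (x + 0 *\<^sub>R d)
      = (1 - 0) * (d \<bullet> (hess F (x + z *\<^sub>R d) *v d))"
    using MVT2[of 0 1 "\<lambda>s. d \<bullet> grad F (x + s *\<^sub>R d)"] grad_has_real_derivative_along_line by force
  then have "d \<bullet> (grad F (x + d) - grad F x) = d \<bullet> (hess F (x + z *\<^sub>R d) *v d)"
    by (simp add: inner_diff_right)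
  then show "m * (d \<bullet> d) \<le> d \<bullet> (grad F (x + d) - grad F x)"
    "d \<bullet> (grad F (x + d) - grad F x) \<le> M * (d \<bullet> d)"
    using hess_bounds unfolding scaled_id_loewner_le_iff loewner_le_scaled_id_iff by auto
qed

lemma grad_strongly_monotone: "m * ((y - x) \<bullet> (y - x)) \<le> (y - x) \<bullet> (grad F y - grad F x)"
  using inner_grad_diff_bounds(1)[of "y - x" x] by simp

lemma first_order_lower_bound: "F x + grad F x \<bullet> d \<le> F (x + d)"
proof -
  define \<psi> where "\<psi> s = F (x + s *\<^sub>R d) - s * (grad F x \<bullet> d)" for s
  have "\<psi> 0 \<le> \<psi> 1"
  proof (rule increasing_if_deriv_nonneg[where a = 0 and b = 1 and \<psi> = \<psi> and \<psi>' = "\<lambda>s. grad F (x + s *\<^sub>R d) \<bullet> d - grad F x \<bullet> d"])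
    show "(\<psi> has_real_derivative (grad F (x + s *\<^sub>R d) \<bullet> d - grad F x \<bullet> d)) (at s)" for s
      unfolding \<psi>_def by (auto intro!: derivative_eq_intros has_real_derivative_along_line)
    show "0 \<le> grad F (x + s *\<^sub>R d) \<bullet> d - grad F x \<bullet> d" if "0 < s" "s < 1" for s
    proof -
      have "0 \<le> m * ((s *\<^sub>R d) \<bullet> (s *\<^sub>R d))" by (metis inner_ge_zero m_pos less_imp_le mult_nonneg_nonneg)
      also have "\<dots> \<le> s * (d \<bullet> (grad F (x + s *\<^sub>R d) - grad F x))"
        using inner_grad_diff_bounds(1)[of "s *\<^sub>R d" x] by simp
      finally show ?thesis using that(1) by (simp add: zero_le_mult_iff inner_diff_right inner_commute)
    qed
  qed simp
  then show ?thesis unfolding \<psi>_def by simp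
qed

lemma descent_lemma: "F (x + d) \<le> F x + grad F x \<bullet> d + M / 2 * (d \<bullet> d)"
proof -
  define \<psi> where "\<psi> s = s * (grad F x \<bullet> d) + M / 2 * s\<^sup>2 * (d \<bullet> d) - F (x + s *\<^sub>R d)" for s
  have "\<psi> 0 \<le> \<psi> 1"
  proof (rule increasing_if_deriv_nonneg[where a = 0 and b = 1 and \<psi> = \<psi> and
        \<psi>' = "\<lambda>s. grad F x \<bullet> d + M * s * (d \<bullet> d) - grad F (x + s *\<^sub>R d) \<bullet> d"])
    show "(\<psi> has_real_derivative (grad F x \<bullet> d + M * s * (d \<bullet> d) - grad F (x + s *\<^sub>R d) \<bullet> d)) (at s)" for s
      unfolding \<psi>_def
      by (auto intro!: derivative_eq_intros has_real_derivative_along_line simp: power2_eq_square)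
    show "0 \<le> grad F x \<bullet> d + M * s * (d \<bullet> d) - grad F (x + s *\<^sub>R d) \<bullet> d" if "0 < s" "s < 1" for s
    proof -
      have "s * (d \<bullet> (grad F (x + s *\<^sub>R d) - grad F x)) \<le> s * (M * s * (d \<bullet> d))"
        using inner_grad_diff_bounds(2)[of "s *\<^sub>R d" x] by (simp add: mult_ac)
      then show ?thesis using that(1) by (simp add: inner_diff_right inner_commute)
    qed
  qed simp
  then show ?thesis unfolding \<psi>_def by simp
qed

lemma grad_cocoercive:
  "(grad F y - grad F x) \<bullet> (grad F y - grad F x) \<le> M * ((y - x) \<bullet> (grad F y - grad F x))"
proof -
  have M: "0 < M" using m_pos m_le_M by linarith
  define r where "r = grad F y - grad F x"
  define k where "k = 1 / M"
  have descent: "F (z + k *\<^sub>R e) \<le> F z + k * (grad F z \<bullet> e) + k / 2 * (e \<bullet> e)" for z e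
  proof -
    have kk: "M / 2 * ((k *\<^sub>R e) \<bullet> (k *\<^sub>R e)) = k / 2 * (e \<bullet> e)"
      unfolding k_def using M by (simp add: power2_eq_square)
    show ?thesis using descent_lemma[of z "k *\<^sub>R e"] unfolding kk by simp
  qed
  \<comment> \<open>bound \<open>F\<close> at \<open>y - r/M\<close> and at \<open>x + r/M\<close> from below and from above, then add\<close>
  have "F x + grad F x \<bullet> (y - k *\<^sub>R r - x) \<le> F y - k * (grad F y \<bullet> r) + k / 2 * (r \<bullet> r)"
    using first_order_lower_bound[of x "y - k *\<^sub>R r - x"] descent[of y "- r"] by simp
  moreover have "F y + grad F y \<bullet> (x + k *\<^sub>R r - y) \<le> F x + k * (grad F x \<bullet> r) + k / 2 * (r \<bullet> r)"
    using first_order_lower_bound[of y "x + k *\<^sub>R r - y"] descent[of x r] by simp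
  ultimately have "k * (r \<bullet> r) \<le> (y - x) \<bullet> r"
    unfolding r_def by (simp add: inner_diff_left inner_diff_right inner_add_right inner_commute algebra_simps)
  then have "M * (k * (r \<bullet> r)) \<le> M * ((y - x) \<bullet> r)" using M by simp
  then show ?thesis unfolding r_def k_def using M by simp
qed

lemma curvature_pair_grad_diff:
  "y \<noteq> x \<Longrightarrow> curvature_pair m M (y - x) (grad F y - grad F x)"
  unfolding curvature_pair_def
  using grad_strongly_monotone[of y x] grad_cocoercive[of y x] by simp

end

theorem lemma4:
  fixes f :: "real^'n \<Rightarrow> 'a \<Rightarrow> real" and \<Theta> :: "'a set"
    and L \<tau> :: nat and m M :: real
    and w :: "nat \<Rightarrow> real^'n" and \<epsilon> :: "nat \<Rightarrow> real"
    and th :: "nat \<Rightarrow> nat \<Rightarrow> 'a"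
  assumes L: "L \<ge> 1" and tau: "\<tau> \<ge> 1"
    and mM: "0 < m" "m \<le> M"
    and A: "\<And>ths. (\<forall>l<L. ths l \<in> \<Theta>) \<Longrightarrow>
              twice_differentiable (fhat L f ths) \<and>
              (\<forall>x. loewner_le (m *\<^sub>R mat 1) (hess (fhat L f ths) x) \<and>
                   loewner_le (hess (fhat L f ths) x) (M *\<^sub>R mat 1))"
    and samples: "\<And>t l. l < L \<Longrightarrow> th t l \<in> \<Theta>"
    and steps: "\<And>t. \<epsilon> t > 0"
    and iter: "\<And>t. w (Suc t) = w t - \<epsilon> t *\<^sub>R
                 (matrix_inv (Bhat \<tau> (vseq w) (rseq L f th w) t) *v shat L f (th t) (w t))"
  shows "\<forall>t\<ge>1. (\<forall>s<t. shat L f (th s) (w s) \<noteq> 0) \<longrightarrow>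
           (let n = CARD('n);
                c = m ^ (n + \<tau>) / (real (n + \<tau>) * M) ^ (n + \<tau> - 1);
                C = real (n + \<tau>) * M
            in loewner_le (c *\<^sub>R mat 1) (Bhat \<tau> (vseq w) (rseq L f th w) t) \<and>
               loewner_le (Bhat \<tau> (vseq w) (rseq L f th w) t) (C *\<^sub>R mat 1))"
proof -
  define v r where "v = vseq w" and "r = rseq L f th w"
  have convex: "strongly_convex_smooth (fhat L f (th s)) m M" for s
    using A samples mM by (simp add: strongly_convex_smooth_def)
  have r_eq: "r s = grad (fhat L f (th s)) (w (Suc s)) - grad (fhat L f (th s)) (w s)" for s
  proof -
    \<comment> \<open>Assumption A for the constant sample \<open>(\<theta>, \<dots>, \<theta>)\<close> makes each \<open>f(\<cdot>, \<theta>)\<close> differentiable.\<close>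
    have "(\<lambda>x. f x (th s l)) differentiable (at z)" if "l < L" for l z
      using A[of "\<lambda>_. th s l"] samples[OF that]
      unfolding fhat_const[OF L] twice_differentiable_def by auto
    then show ?thesis unfolding r_def rseq_def by (simp add: shat_eq_grad_fhat)
  qed
  have pair_if_moving: "curvature_pair m M (v s) (r s)" if "v s \<noteq> 0" for s
  proof -
    have "w (Suc s) \<noteq> w s" using that unfolding v_def vseq_def by simp
    from strongly_convex_smooth.curvature_pair_grad_diff[OF convex this]
    show ?thesis unfolding r_eq v_def vseq_def .
  qed
  have step: "v s = - (\<epsilon> s *\<^sub>R (matrix_inv (Bhat \<tau> v r s) *v shat L f (th s) (w s)))" for s
    using iter[of s] unfolding v_def r_def vseq_def by simp
  have step_sizes: "\<epsilon> s \<noteq> 0" for s using steps[of s] by simp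
  have "0 < CARD('n)" by (simp add: card_gt_0_iff)
  then have N: "min \<tau> t < CARD('n) + \<tau>" for t
    using min.cobounded1[of \<tau> t] by linarith
  have "loewner_le ((m ^ (CARD('n) + \<tau>) / (real (CARD('n) + \<tau>) * M) ^ (CARD('n) + \<tau> - 1)) *\<^sub>R mat 1)
                (Bhat \<tau> v r t) \<and>
             loewner_le (Bhat \<tau> v r t) ((real (CARD('n) + \<tau>) * M) *\<^sub>R mat 1)"
    if "1 \<le> t" and "\<forall>s<t. shat L f (th s) (w s) \<noteq> 0" for t
    using Bhat_bounds[OF mM that(1) olbfgs_curvature_pairs[OF mM pair_if_moving step step_sizes that(2)] N]
    by blast
  then show ?thesis unfolding Let_def v_def r_def by blast
qed

end
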